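(* For every type $t$, if $u:\mathbb{N}\to[\![t]\!]$ and $u':\mathbb{N}\to[\![t]\!]_s$ are ascending chains with $\mathsf{sim}\,t\,u_i\,u'_i$ for all $i$, then $\mathsf{sim}\,t\,(\bigsqcup_i u_i)\,(\bigsqcup_i u'_i)$.
   Context: Fix sets $\mathsf{Principals}$, $\mathsf{Privileges}$ and $\mathcal{A}:\mathsf{Principals}\to\mathcal{P}(\mathsf{Privileges})$. Types $t::=\mathtt{bool}\mid t_1\to t_2$. $\bot,\star$ are two distinct values, neither booleans nor functions. For a cpo $C$, $C_{\bot\star}=C\cup\{\bot,\star\}$ with $u\le v$ iff $u=\bot$ or $u=v$ or $u,v\in C$, $u\le v$. Eager domains: $[\![\mathtt{bool}]\!]=\{\mathsf{true},\mathsf{false}\}$, $\mathcal{P}(\mathsf{Privileges})$ ordered by equality, $[\![t_1\to t_2]\!]=\mathcal{P}(\mathsf{Privileges})\to[\![t_1]\!]\to[\![t_2]\!]_{\bot\star}$ (continuous, pointwise order, lubs pointwise). Stacks: $\mathsf{Stacks}$ = nonempty lists of pairs $\langle n,P\rangle\in\mathsf{Principals}\times\mathcal{P}(\mathsf{Privileges})$, ordered by equality; $\mathsf{check}(p,\mathrm{nil})$ false, $\mathsf{check}(p,\langle n,P\rangle::S)$ iff $p\in\mathcal{A}(n)\wedge(p\in P\vee\mathsf{check}(p,S))$; $\mathsf{privs}(S)=\{p:\mathsf{check}(p,S)\}$. Stack domains: $[\![\mathtt{bool}]\!]_s=\{\mathsf{true},\mathsf{false}\}$, $[\![t_1\to t_2]\!]_s=\mathsf{Stacks}\to[\![t_1]\!]_s\to([\![t_2]\!]_s)_{\bot\star}$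 (continuous, pointwise, lubs pointwise). Relation $\mathsf{sim}\,t\subseteq[\![t]\!]_{\bot\star}\times([\![t]\!]_s)_{\bot\star}$: $\mathsf{sim}\,t\,d\,d'$ is true if $d=d'\in\{\bot,\star\}$, false if $d\ne d'$ and one of them is in $\{\bot,\star\}$; otherwise $\mathsf{sim}\,\mathtt{bool}\,b\,b'$ iff $b=b'$, and $\mathsf{sim}(t_1\to t_2)\,f\,f'$ iff for all $S\in\mathsf{Stacks}$, $d\in[\![t_1]\!]$, $d'\in[\![t_1]\!]_s$: $\mathsf{sim}\,t_1\,d\,d'$ implies $\mathsf{sim}\,t_2\,(f(\mathsf{privs}\,S)d)\,(f'Sd')$. *)

theory Defs
  imports Main
begin

datatype ty = TBool | TFun ty ty

datatype 'a lift = Bot | Star | Val 'a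

definition liftset :: "'a set \<Rightarrow> 'a lift set" where
  "liftset D = {Bot, Star} \<union> Val ` D"

definition lift_le :: "('a \<Rightarrow> 'a \<Rightarrow> bool) \<Rightarrow> 'a lift \<Rightarrow> 'a lift \<Rightarrow> bool" where
  "lift_le L u v \<longleftrightarrow> u = Bot \<or> u = v \<or> (\<exists>x y. u = Val x \<and> v = Val y \<and> L x y)"

definition is_chain :: "'a set \<Rightarrow> ('a \<Rightarrow> 'a \<Rightarrow> bool) \<Rightarrow> (nat \<Rightarrow> 'a) \<Rightarrow> bool" where
  "is_chain D L c \<longleftrightarrow> (\<forall>i. c i \<in> D \<and> L (c i) (c (Suc i)))"

definition is_lub :: "'a set \<Rightarrow> ('a \<Rightarrow> 'a \<Rightarrow> bool) \<Rightarrow> 'a set \<Rightarrow> 'a \<Rightarrow> bool" where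
  "is_lub D L Y x \<longleftrightarrow> x \<in> D \<and> (\<forall>y\<in>Y. L y x) \<and> (\<forall>z\<in>D. (\<forall>y\<in>Y. L y z) \<longrightarrow> L x z)"

definition chain_lub :: "'a set \<Rightarrow> ('a \<Rightarrow> 'a \<Rightarrow> bool) \<Rightarrow> (nat \<Rightarrow> 'a) \<Rightarrow> 'a" where
  "chain_lub D L c = (THE x. is_lub D L (range c) x)"

definition cont_fun ::
  "'a set \<Rightarrow> ('a \<Rightarrow> 'a \<Rightarrow> bool) \<Rightarrow> 'b set \<Rightarrow> ('b \<Rightarrow> 'b \<Rightarrow> bool) \<Rightarrow> ('a \<Rightarrow> 'b) \<Rightarrow> bool" where
  "cont_fun D1 L1 D2 L2 g \<longleftrightarrow>
     (\<forall>x\<in>D1. g x \<in> D2) \<and>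
     (\<forall>x\<in>D1. \<forall>y\<in>D1. L1 x y \<longrightarrow> L2 (g x) (g y)) \<and>
     (\<forall>c x. is_chain D1 L1 c \<and> is_lub D1 L1 (range c) x \<longrightarrow> is_lub D2 L2 (g ` range c) (g x))"

text \<open>eB embeds the booleans; eA x is the function (P(Privileges) -> 'e -> 'e lift)
  represented by the code x. eden t = (carrier of [[t]], order of [[t]]).\<close>

primrec eden :: "(bool \<Rightarrow> 'e) \<Rightarrow> ('e \<Rightarrow> 'p set \<Rightarrow> 'e \<Rightarrow> 'e lift) \<Rightarrow> ty \<Rightarrow> 'e set \<times> ('e \<Rightarrow> 'e \<Rightarrow> bool)" where
  "eden eB eA TBool = (range eB, (=))"
| "eden eB eA (TFun t1 t2) =
     ({x. \<forall>P. cont_fun (fst (eden eB eA t1)) (snd (eden eB eA t1))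
                        (liftset (fst (eden eB eA t2))) (lift_le (snd (eden eB eA t2))) (eA x P)},
      (\<lambda>x y. \<forall>P. \<forall>d\<in>fst (eden eB eA t1). lift_le (snd (eden eB eA t2)) (eA x P d) (eA y P d)))"

text \<open>Adequacy of the universe for t: for every arrow subtype t1 -> t2 of t, the codes in
  [[t1 -> t2]] correspond bijectively (via eA, restricted to [[t1]]) to the continuous functions
  P(Privileges) -> [[t1]] -> [[t2]]_{bot,star}.\<close>

primrec eager_adequate :: "(bool \<Rightarrow> 'e) \<Rightarrow> ('e \<Rightarrow> 'p set \<Rightarrow> 'e \<Rightarrow> 'e lift) \<Rightarrow> ty \<Rightarrow> bool" where
  "eager_adequate eB eA TBool = True"
| "eager_adequate eB eA (TFun t1 t2) =
     (eager_adequate eB eA t1 \<and> eager_adequate eB eA t2 \<and>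
      (\<forall>x\<in>fst (eden eB eA (TFun t1 t2)). \<forall>y\<in>fst (eden eB eA (TFun t1 t2)).
          (\<forall>P. \<forall>d\<in>fst (eden eB eA t1). eA x P d = eA y P d) \<longrightarrow> x = y) \<and>
      (\<forall>f. (\<forall>P. cont_fun (fst (eden eB eA t1)) (snd (eden eB eA t1))
                        (liftset (fst (eden eB eA t2))) (lift_le (snd (eden eB eA t2))) (f P)) \<longrightarrow>
          (\<exists>x\<in>fst (eden eB eA (TFun t1 t2)). \<forall>P. \<forall>d\<in>fst (eden eB eA t1). eA x P d = f P d)))"

text \<open>Stacks are nonempty lists of pairs (n, P); a code's behaviour on the empty list is irrelevant.\<close>

primrec sden :: "(bool \<Rightarrow> 's) \<Rightarrow> ('s \<Rightarrow> ('n \<times> 'p set) list \<Rightarrow> 's \<Rightarrow> 's lift) \<Rightarrow> ty \<Rightarrow> 's set \<times> ('s \<Rightarrow> 's \<Rightarrow> bool)" where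
  "sden sB sA TBool = (range sB, (=))"
| "sden sB sA (TFun t1 t2) =
     ({x. \<forall>S. S \<noteq> [] \<longrightarrow> cont_fun (fst (sden sB sA t1)) (snd (sden sB sA t1))
                        (liftset (fst (sden sB sA t2))) (lift_le (snd (sden sB sA t2))) (sA x S)},
      (\<lambda>x y. \<forall>S. S \<noteq> [] \<longrightarrow> (\<forall>d\<in>fst (sden sB sA t1). lift_le (snd (sden sB sA t2)) (sA x S d) (sA y S d))))"

primrec stack_adequate :: "(bool \<Rightarrow> 's) \<Rightarrow> ('s \<Rightarrow> ('n \<times> 'p set) list \<Rightarrow> 's \<Rightarrow> 's lift) \<Rightarrow> ty \<Rightarrow> bool" where
  "stack_adequate sB sA TBool = True"
| "stack_adequate sB sA (TFun t1 t2) =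
     (stack_adequate sB sA t1 \<and> stack_adequate sB sA t2 \<and>
      (\<forall>x\<in>fst (sden sB sA (TFun t1 t2)). \<forall>y\<in>fst (sden sB sA (TFun t1 t2)).
          (\<forall>S. S \<noteq> [] \<longrightarrow> (\<forall>d\<in>fst (sden sB sA t1). sA x S d = sA y S d)) \<longrightarrow> x = y) \<and>
      (\<forall>f. (\<forall>S. S \<noteq> [] \<longrightarrow> cont_fun (fst (sden sB sA t1)) (snd (sden sB sA t1))
                        (liftset (fst (sden sB sA t2))) (lift_le (snd (sden sB sA t2))) (f S)) \<longrightarrow>
          (\<exists>x\<in>fst (sden sB sA (TFun t1 t2)). \<forall>S. S \<noteq> [] \<longrightarrow> (\<forall>d\<in>fst (sden sB sA t1). sA x S d = f S d))))"

fun check :: "('n \<Rightarrow> 'p set) \<Rightarrow> 'p \<Rightarrow> ('n \<times> 'p set) list \<Rightarrow> bool" where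
  "check Au p [] = False"
| "check Au p ((n, P) # S) = (p \<in> Au n \<and> (p \<in> P \<or> check Au p S))"

definition privs :: "('n \<Rightarrow> 'p set) \<Rightarrow> ('n \<times> 'p set) list \<Rightarrow> 'p set" where
  "privs Au S = {p. check Au p S}"

definition lift_rel :: "('a \<Rightarrow> 'b \<Rightarrow> bool) \<Rightarrow> 'a lift \<Rightarrow> 'b lift \<Rightarrow> bool" where
  "lift_rel R d d' =
     (case d of
        Bot \<Rightarrow> d' = Bot
      | Star \<Rightarrow> d' = Star
      | Val x \<Rightarrow> (case d' of Val y \<Rightarrow> R x y | _ \<Rightarrow> False))"

primrec sim :: "('n \<Rightarrow> 'p set) \<Rightarrow> (bool \<Rightarrow> 'e) \<Rightarrow> ('e \<Rightarrow> 'p set \<Rightarrow> 'e \<Rightarrow> 'e lift)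
   \<Rightarrow> (bool \<Rightarrow> 's) \<Rightarrow> ('s \<Rightarrow> ('n \<times> 'p set) list \<Rightarrow> 's \<Rightarrow> 's lift) \<Rightarrow> ty \<Rightarrow> 'e lift \<Rightarrow> 's lift \<Rightarrow> bool" where
  "sim Au eB eA sB sA TBool = lift_rel (\<lambda>x y. \<exists>b b'. x = eB b \<and> y = sB b' \<and> b = b')"
| "sim Au eB eA sB sA (TFun t1 t2) = lift_rel (\<lambda>f g.
     \<forall>S. S \<noteq> [] \<longrightarrow>
       (\<forall>d\<in>fst (eden eB eA t1). \<forall>d'\<in>fst (sden sB sA t1).
          sim Au eB eA sB sA t1 (Val d) (Val d') \<longrightarrow>
          sim Au eB eA sB sA t2 (eA f (privs Au S) d) (sA g S d')))"

end

theory Submission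
  imports Defs
begin

text \<open>The lub of a chain in a function domain is computed pointwise, and a chain in a lifted
  domain C_{bot,star} is eventually constant at bot or star, or is eventually a chain in C whose
  lub is the lub of the whole chain. Hence the lubs of two chains that are related by sim at
  every stage are related by sim too: induction on the type reduces the arrow case to the lubs
  of the pointwise chains of results, and the lifted case analysis reduces those to the
  induction hypothesis for the result type.\<close>

definition po_on :: "'a set \<Rightarrow> ('a \<Rightarrow> 'a \<Rightarrow> bool) \<Rightarrow> bool" where
  "po_on D L \<longleftrightarrow> (\<forall>x\<in>D. L x x) \<and> (\<forall>x\<in>D. \<forall>y\<in>D. \<forall>z\<in>D. L x y \<longrightarrow> L y z \<longrightarrow> L x z)
     \<and> (\<forall>x\<in>D. \<forall>y\<in>D. L x y \<longrightarrow> L y x \<longrightarrow> x = y)"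

definition chain_complete :: "'a set \<Rightarrow> ('a \<Rightarrow> 'a \<Rightarrow> bool) \<Rightarrow> bool" where
  "chain_complete D L \<longleftrightarrow> (\<forall>c. is_chain D L c \<longrightarrow> (\<exists>x. is_lub D L (range c) x))"

lemma po_on_refl: "po_on D L \<Longrightarrow> x \<in> D \<Longrightarrow> L x x"
  unfolding po_on_def by blast

lemma po_on_trans: "po_on D L \<Longrightarrow> x \<in> D \<Longrightarrow> y \<in> D \<Longrightarrow> z \<in> D \<Longrightarrow> L x y \<Longrightarrow> L y z \<Longrightarrow> L x z"
  unfolding po_on_def by blast

lemma po_on_antisym: "po_on D L \<Longrightarrow> x \<in> D \<Longrightarrow> y \<in> D \<Longrightarrow> L x y \<Longrightarrow> L y x \<Longrightarrow> x = y"
  unfolding po_on_def by blast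

lemma is_lub_unique: "po_on D L \<Longrightarrow> is_lub D L Y x \<Longrightarrow> is_lub D L Y y \<Longrightarrow> x = y"
  unfolding po_on_def is_lub_def by blast

lemma chain_lub_eqI: "po_on D L \<Longrightarrow> is_lub D L (range c) x \<Longrightarrow> chain_lub D L c = x"
  unfolding chain_lub_def by (rule the_equality) (auto intro: is_lub_unique)

lemma chain_lub_is_lub:
  "po_on D L \<Longrightarrow> chain_complete D L \<Longrightarrow> is_chain D L c \<Longrightarrow> is_lub D L (range c) (chain_lub D L c)"
  by (metis chain_lub_eqI chain_complete_def)

lemma chain_in: "is_chain D L c \<Longrightarrow> c i \<in> D"
  by (simp add: is_chain_def)

lemma chain_mono:
  assumes "po_on D L" "is_chain D L c" "i \<le> j"
  shows "L (c i) (c j)"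
  using assms(3)
proof (induction j)
  case 0
  then show ?case using assms(1,2) by (simp add: po_on_refl chain_in)
next
  case (Suc j)
  show ?case
  proof (cases "i = Suc j")
    case True
    then show ?thesis using assms(1,2) by (simp add: po_on_refl chain_in)
  next
    case False
    with Suc have "L (c i) (c j)" by simp
    then show ?thesis
      using assms(1,2) po_on_trans[OF _ chain_in chain_in chain_in] unfolding is_chain_def by blast
  qed
qed

lemma discrete_chain_const: "is_chain D (=) c \<Longrightarrow> c i = c 0"
  by (induction i) (simp_all add: is_chain_def)

lemma is_lub_discrete_chain: "is_chain D (=) c \<Longrightarrow> is_lub D (=) (range c) (c 0)"
  using discrete_chain_const chain_in unfolding is_lub_def by fastforce

lemma po_on_discrete: "po_on D (=)"
  unfolding po_on_def by blast

lemma chain_complete_discrete: "chain_complete D (=)"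
  unfolding chain_complete_def using is_lub_discrete_chain by blast

lemma chain_lub_discrete: "is_chain D (=) c \<Longrightarrow> chain_lub D (=) c = c 0"
  by (rule chain_lub_eqI[OF po_on_discrete is_lub_discrete_chain])

subsection \<open>Lifted domains\<close>

definition the_val :: "'a lift \<Rightarrow> 'a" where
  "the_val v = (case v of Val x \<Rightarrow> x)"

lemma the_val_Val [simp]: "the_val (Val x) = x"
  by (simp add: the_val_def)

lemma lift_rel_simps [simp]:
  "lift_rel R Bot d \<longleftrightarrow> d = Bot"
  "lift_rel R Star d \<longleftrightarrow> d = Star"
  "lift_rel R (Val x) d \<longleftrightarrow> (\<exists>y. d = Val y \<and> R x y)"
  by (auto simp: lift_rel_def split: lift.splits)

lemma lift_le_simps [simp]:
  "lift_le L Bot v"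
  "lift_le L Star v \<longleftrightarrow> v = Star"
  "lift_le L (Val x) v \<longleftrightarrow> (\<exists>y. v = Val y \<and> (x = y \<or> L x y))"
  by (auto simp: lift_le_def)

lemma po_on_liftset: "po_on D L \<Longrightarrow> po_on (liftset D) (lift_le L)"
  unfolding po_on_def liftset_def lift_le_def by blast

lemma is_lub_liftset_Bot: "\<forall>i. c i = Bot \<Longrightarrow> is_lub (liftset D) (lift_le L) (range c) Bot"
  unfolding is_lub_def liftset_def by auto

lemma is_lub_liftset_Star:
  assumes "po_on D L" "is_chain (liftset D) (lift_le L) c" "c k = Star"
  shows "is_lub (liftset D) (lift_le L) (range c) Star"
proof -
  note mono = chain_mono[OF po_on_liftset[OF assms(1)] assms(2)]
  have below_Star: "c i = Bot \<or> c i = Star" for i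
  proof (cases "i \<le> k")
    case True
    then have "lift_le L (c i) (c k)" by (rule mono)
    then show ?thesis using assms(3) by (cases "c i") auto
  next
    case False
    then have "lift_le L (c k) (c i)" by (intro mono) simp
    then show ?thesis using assms(3) by simp
  qed
  show ?thesis
    unfolding is_lub_def
  proof (intro conjI ballI impI)
    show "Star \<in> liftset D" by (simp add: liftset_def)
  next
    fix y assume "y \<in> range c"
    then show "lift_le L y Star" using below_Star by (metis imageE lift_le_simps(1,2))
  next
    fix z assume "\<forall>y\<in>range c. lift_le L y z"
    then show "lift_le L Star z" using assms(3) by (metis rangeI)
  qed
qed

lemma lift_chain_tail:
  assumes "po_on D L" "is_chain (liftset D) (lift_le L) c" "c k = Val x"
  shows "c (n + k) = Val (the_val (c (n + k)))"
    and "is_chain D L (\<lambda>n. the_val (c (n + k)))"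
proof -
  have vals: "\<exists>y\<in>D. c (n + k) = Val y" for n
  proof -
    have "lift_le L (c k) (c (n + k))" by (rule chain_mono[OF po_on_liftset[OF assms(1)] assms(2)]) simp
    then obtain y where "c (n + k) = Val y" using assms(3) by auto
    with chain_in[OF assms(2), of "n + k"] show ?thesis unfolding liftset_def by auto
  qed
  show "c (n + k) = Val (the_val (c (n + k)))" for n using vals[of n] by auto
  show "is_chain D L (\<lambda>n. the_val (c (n + k)))"
    unfolding is_chain_def
  proof
    fix n
    have "lift_le L (c (n + k)) (c (Suc n + k))" using assms(2) by (simp add: is_chain_def)
    then show "the_val (c (n + k)) \<in> D \<and> L (the_val (c (n + k))) (the_val (c (Suc n + k)))"
      using vals[of n] vals[of "Suc n"] po_on_refl[OF assms(1)] by auto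
  qed
qed

lemma is_lub_liftset_Val:
  assumes "po_on D L" "chain_complete D L" "is_chain (liftset D) (lift_le L) c" "c k = Val x"
  shows "is_lub (liftset D) (lift_le L) (range c) (Val (chain_lub D L (\<lambda>n. the_val (c (n + k)))))"
proof -
  define v where "v = (\<lambda>n. the_val (c (n + k)))"
  have cv: "c (n + k) = Val (v n)" for n
    unfolding v_def by (rule lift_chain_tail(1)[OF assms(1,3,4)])
  have lub: "is_lub D L (range v) (chain_lub D L v)"
    unfolding v_def by (rule chain_lub_is_lub[OF assms(1,2) lift_chain_tail(2)[OF assms(1,3,4)]])
  then have lub_in: "Val (chain_lub D L v) \<in> liftset D"
    unfolding is_lub_def liftset_def by blast
  show ?thesis
    unfolding v_def[symmetric] is_lub_def
  proof (intro conjI ballI impI lub_in)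
    fix y assume "y \<in> range c"
    then obtain i where y: "y = c i" by auto
    have "lift_le L (c i) (c (i + k))"
      by (rule chain_mono[OF po_on_liftset[OF assms(1)] assms(3)]) simp
    moreover have "lift_le L (c (i + k)) (Val (chain_lub D L v))"
      using lub cv[of i] unfolding is_lub_def by auto
    ultimately show "lift_le L y (Val (chain_lub D L v))"
      using y po_on_trans[OF po_on_liftset[OF assms(1)] chain_in[OF assms(3)] chain_in[OF assms(3)] lub_in]
      by blast
  next
    fix z assume z: "z \<in> liftset D" "\<forall>y\<in>range c. lift_le L y z"
    then obtain w where w: "z = Val w" using assms(4) by (metis lift_le_simps(3) rangeI)
    with z(1) have "w \<in> D" unfolding liftset_def by auto
    moreover have "L (v n) w" for n
      using z(2) cv[of n] w po_on_refl[OF assms(1) \<open>w \<in> D\<close>] by (metis lift.inject lift_le_simps(3) rangeI)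
    ultimately have "L (chain_lub D L v) w" using lub unfolding is_lub_def by auto
    then show "lift_le L (Val (chain_lub D L v)) z" using w by simp
  qed
qed

lemma chain_complete_liftset:
  assumes "po_on D L" "chain_complete D L"
  shows "chain_complete (liftset D) (lift_le L)"
  unfolding chain_complete_def
proof (intro allI impI)
  fix c assume c: "is_chain (liftset D) (lift_le L) c"
  show "\<exists>x. is_lub (liftset D) (lift_le L) (range c) x"
  proof (cases "\<forall>i. c i = Bot")
    case True
    then show ?thesis using is_lub_liftset_Bot by blast
  next
    case False
    then obtain k where "c k \<noteq> Bot" by auto
    then show ?thesis
      by (cases "c k") (use is_lub_liftset_Star[OF assms(1) c] is_lub_liftset_Val[OF assms c] in blast)+
  qed
qed

lemma lift_rel_chain_lub:
  assumes dom: "po_on D L" "chain_complete D L" "po_on D' L'" "chain_complete D' L'"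
    and a: "is_chain (liftset D) (lift_le L) a" and b: "is_chain (liftset D') (lift_le L') b"
    and rel: "\<And>i. lift_rel R (a i) (b i)"
    and R_lub: "\<And>v w. is_chain D L v \<Longrightarrow> is_chain D' L' w \<Longrightarrow> (\<forall>i. R (v i) (w i))
                  \<Longrightarrow> R (chain_lub D L v) (chain_lub D' L' w)"
  shows "lift_rel R (chain_lub (liftset D) (lift_le L) a) (chain_lub (liftset D') (lift_le L') b)"
proof (cases "\<forall>i. a i = Bot")
  case True
  then have "\<forall>i. b i = Bot" using rel by (metis lift_rel_simps(1))
  with True show ?thesis
    using chain_lub_eqI[OF po_on_liftset[OF dom(1)] is_lub_liftset_Bot]
      chain_lub_eqI[OF po_on_liftset[OF dom(3)] is_lub_liftset_Bot] by simp
next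
  case False
  then obtain k where k: "a k \<noteq> Bot" by auto
  show ?thesis
  proof (cases "a k")
    case Bot
    with k show ?thesis by simp
  next
    case Star
    then have "b k = Star" using rel[of k] by simp
    with Star show ?thesis
      using chain_lub_eqI[OF po_on_liftset[OF dom(1)] is_lub_liftset_Star[OF dom(1) a]]
        chain_lub_eqI[OF po_on_liftset[OF dom(3)] is_lub_liftset_Star[OF dom(3) b]] by simp
  next
    case (Val x)
    then obtain y where y: "b k = Val y" using rel[of k] by auto
    have "R (the_val (a (n + k))) (the_val (b (n + k)))" for n
      using rel[of "n + k"] lift_chain_tail(1)[OF dom(1) a Val] lift_chain_tail(1)[OF dom(3) b y]
      by (metis lift_rel_simps(3) lift.inject the_val_Val)
    then have "R (chain_lub D L (\<lambda>n. the_val (a (n + k)))) (chain_lub D' L' (\<lambda>n. the_val (b (n + k))))"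
      using R_lub lift_chain_tail(2)[OF dom(1) a Val] lift_chain_tail(2)[OF dom(3) b y] by blast
    then show ?thesis
      using chain_lub_eqI[OF po_on_liftset[OF dom(1)] is_lub_liftset_Val[OF dom(1,2) a Val]]
        chain_lub_eqI[OF po_on_liftset[OF dom(3)] is_lub_liftset_Val[OF dom(3,4) b y]] by simp
  qed
qed

subsection \<open>Function domains\<close>

lemma cont_fun_chain_lub:
  assumes po2: "po_on D2 L2" and complete2: "chain_complete D2 L2"
    and cont: "\<And>n. cont_fun D1 L1 D2 L2 (F n)"
    and step: "\<And>n d. d \<in> D1 \<Longrightarrow> L2 (F n d) (F (Suc n) d)"
  shows "cont_fun D1 L1 D2 L2 (\<lambda>d. chain_lub D2 L2 (\<lambda>n. F n d))"
proof -
  define G where "G = (\<lambda>d. chain_lub D2 L2 (\<lambda>n. F n d))"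
  have F_in: "F n d \<in> D2" if "d \<in> D1" for n d
    using cont[of n] that unfolding cont_fun_def by blast
  have F_mono: "L2 (F n x) (F n y)" if "x \<in> D1" "y \<in> D1" "L1 x y" for n x y
    using cont[of n] that unfolding cont_fun_def by blast
  have G_lub: "is_lub D2 L2 (range (\<lambda>n. F n d)) (G d)" if "d \<in> D1" for d
    unfolding G_def using that F_in step
    by (intro chain_lub_is_lub[OF po2 complete2]) (simp add: is_chain_def)
  then have G_in: "G d \<in> D2" and G_upper: "L2 (F n d) (G d)"
    and G_least: "z \<in> D2 \<Longrightarrow> (\<And>n. L2 (F n d) z) \<Longrightarrow> L2 (G d) z" if "d \<in> D1" for n d z
    using that unfolding is_lub_def by blast+
  have G_mono: "L2 (G x) (G y)" if "x \<in> D1" "y \<in> D1" "L1 x y" for x y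
    using that po_on_trans[OF po2 F_in F_in G_in F_mono G_upper] by (intro G_least G_in) blast+
  have "is_lub D2 L2 (G ` range c) (G x)" if c: "is_chain D1 L1 c" and x: "is_lub D1 L1 (range c) x" for c x
  proof -
    have x_in: "x \<in> D1" and c_le_x: "L1 (c j) x" for j
      using x unfolding is_lub_def by blast+
    show ?thesis
      unfolding is_lub_def
    proof (intro conjI ballI impI G_in x_in)
      fix y assume "y \<in> G ` range c"
      then show "L2 y (G x)" using G_mono[OF chain_in[OF c] x_in c_le_x] by blast
    next
      fix z assume z: "z \<in> D2" "\<forall>y\<in>G ` range c. L2 y z"
      show "L2 (G x) z"
      proof (rule G_least[OF x_in z(1)])
        fix n
        have "L2 (F n (c j)) z" for j
          using po_on_trans[OF po2 F_in G_in z(1) G_upper] z(2) chain_in[OF c] by blast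
        moreover have "is_lub D2 L2 (F n ` range c) (F n x)"
          using cont[of n] c x unfolding cont_fun_def by blast
        ultimately show "L2 (F n x) z" using z(1) unfolding is_lub_def by blast
      qed
    qed
  qed
  then show ?thesis unfolding cont_fun_def G_def[symmetric] using G_in G_mono by blast
qed

text \<open>Codes x for families (A x i)_{i in I} of continuous maps D1 -> (D2)_{bot,star}, every family
  having exactly one code. For arrow types, I is P(Privileges) in the eager domain and Stacks in
  the stack domain.\<close>

locale fun_domain =
  fixes D1 :: "'a set" and L1 :: "'a \<Rightarrow> 'a \<Rightarrow> bool"
    and D2 :: "'b set" and L2 :: "'b \<Rightarrow> 'b \<Rightarrow> bool"
    and I :: "'i set" and A :: "'c \<Rightarrow> 'i \<Rightarrow> 'a \<Rightarrow> 'b lift"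
    and D :: "'c set" and L :: "'c \<Rightarrow> 'c \<Rightarrow> bool"
  assumes po_on_cod: "po_on D2 L2" and chain_complete_cod: "chain_complete D2 L2"
    and D_eq: "D = {x. \<forall>i\<in>I. cont_fun D1 L1 (liftset D2) (lift_le L2) (A x i)}"
    and L_eq: "L = (\<lambda>x y. \<forall>i\<in>I. \<forall>d\<in>D1. lift_le L2 (A x i d) (A y i d))"
    and codes_inj: "\<forall>x\<in>D. \<forall>y\<in>D. (\<forall>i\<in>I. \<forall>d\<in>D1. A x i d = A y i d) \<longrightarrow> x = y"
    and codes_surj: "\<forall>f. (\<forall>i\<in>I. cont_fun D1 L1 (liftset D2) (lift_le L2) (f i)) \<longrightarrow>
                  (\<exists>x\<in>D. \<forall>i\<in>I. \<forall>d\<in>D1. A x i d = f i d)"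
begin

lemma A_in_liftset: "x \<in> D \<Longrightarrow> i \<in> I \<Longrightarrow> d \<in> D1 \<Longrightarrow> A x i d \<in> liftset D2"
  unfolding D_eq cont_fun_def by blast

lemma po_on_dom: "po_on D L"
  unfolding po_on_def
proof (intro conjI ballI impI)
  fix x assume "x \<in> D"
  then show "L x x" unfolding L_eq by (simp add: lift_le_def)
next
  fix x y z assume "x \<in> D" "y \<in> D" "z \<in> D" "L x y" "L y z"
  then show "L x z" unfolding L_eq using po_on_trans[OF po_on_liftset[OF po_on_cod] A_in_liftset A_in_liftset A_in_liftset] by metis
next
  fix x y assume "x \<in> D" "y \<in> D" "L x y" "L y x"
  then show "x = y" 
    using codes_inj po_on_antisym[OF po_on_liftset[OF po_on_cod] A_in_liftset A_in_liftset] unfolding L_eq by metis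
qed

lemma chain_apply:
  assumes "is_chain D L c" "i \<in> I" "d \<in> D1"
  shows "is_chain (liftset D2) (lift_le L2) (\<lambda>n. A (c n) i d)"
  using assms A_in_liftset[OF chain_in[OF assms(1)]] unfolding is_chain_def L_eq by blast

lemma is_lub_pointwise:
  assumes c: "is_chain D L c"
  shows "\<exists>x. is_lub D L (range c) x \<and>
           (\<forall>i\<in>I. \<forall>d\<in>D1. A x i d = chain_lub (liftset D2) (lift_le L2) (\<lambda>n. A (c n) i d))"
proof -
  note po_lift = po_on_liftset[OF po_on_cod]
    and complete_lift = chain_complete_liftset[OF po_on_cod chain_complete_cod]
  define f where "f = (\<lambda>i d. chain_lub (liftset D2) (lift_le L2) (\<lambda>n. A (c n) i d))"
  have "cont_fun D1 L1 (liftset D2) (lift_le L2) (f i)" if "i \<in> I" for i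
    unfolding f_def using that chain_in[OF c] c
    by (intro cont_fun_chain_lub[OF po_lift complete_lift]) (auto simp: D_eq L_eq is_chain_def)
  then obtain x where x_in: "x \<in> D" and x_eq: "\<forall>i\<in>I. \<forall>d\<in>D1. A x i d = f i d"
    using codes_surj by blast
  have f_lub: "is_lub (liftset D2) (lift_le L2) (range (\<lambda>n. A (c n) i d)) (f i d)"
    if "i \<in> I" "d \<in> D1" for i d
    unfolding f_def by (rule chain_lub_is_lub[OF po_lift complete_lift chain_apply[OF c that]])
  have "is_lub D L (range c) x"
    unfolding is_lub_def
  proof (intro conjI ballI impI x_in)
    fix y assume "y \<in> range c"
    then show "L y x" unfolding L_eq using f_lub x_eq unfolding is_lub_def by auto
  next
    fix z assume z: "z \<in> D" "\<forall>y\<in>range c. L y z"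
    show "L x z"
      unfolding L_eq
    proof (intro ballI)
      fix i d assume id: "i \<in> I" "d \<in> D1"
      have "\<forall>n. lift_le L2 (A (c n) i d) (A z i d)" using z(2) id unfolding L_eq by blast
      then show "lift_le L2 (A x i d) (A z i d)"
        using f_lub[OF id] A_in_liftset[OF z(1) id] x_eq id unfolding is_lub_def by auto
    qed
  qed
  with x_eq show ?thesis unfolding f_def by blast
qed

lemma chain_complete_dom: "chain_complete D L"
  unfolding chain_complete_def using is_lub_pointwise by blast

lemma A_chain_lub:
  assumes "is_chain D L c" "i \<in> I" "d \<in> D1"
  shows "A (chain_lub D L c) i d = chain_lub (liftset D2) (lift_le L2) (\<lambda>n. A (c n) i d)"
  using is_lub_pointwise[OF assms(1)] chain_lub_eqI[OF po_on_dom] assms(2,3) by metis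

end

abbreviation eager_carrier where "eager_carrier eB eA t \<equiv> fst (eden eB eA t)"
abbreviation eager_order where "eager_order eB eA t \<equiv> snd (eden eB eA t)"
abbreviation stack_carrier where "stack_carrier sB sA t \<equiv> fst (sden sB sA t)"
abbreviation stack_order where "stack_order sB sA t \<equiv> snd (sden sB sA t)"

lemma eden_fun_domain:
  assumes "eager_adequate eB eA (TFun t1 t2)"
    and "po_on (eager_carrier eB eA t2) (eager_order eB eA t2)"
    and "chain_complete (eager_carrier eB eA t2) (eager_order eB eA t2)"
  shows "fun_domain (eager_carrier eB eA t1) (eager_order eB eA t1)
           (eager_carrier eB eA t2) (eager_order eB eA t2) UNIV eA
           (eager_carrier eB eA (TFun t1 t2)) (eager_order eB eA (TFun t1 t2))"
  using assms by unfold_locales simp_all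

lemma sden_fun_domain:
  assumes "stack_adequate sB sA (TFun t1 t2)"
    and "po_on (stack_carrier sB sA t2) (stack_order sB sA t2)"
    and "chain_complete (stack_carrier sB sA t2) (stack_order sB sA t2)"
  shows "fun_domain (stack_carrier sB sA t1) (stack_order sB sA t1)
           (stack_carrier sB sA t2) (stack_order sB sA t2) {S. S \<noteq> []} sA
           (stack_carrier sB sA (TFun t1 t2)) (stack_order sB sA (TFun t1 t2))"
  using assms by unfold_locales simp_all

lemma eden_cpo:
  "eager_adequate eB eA t \<Longrightarrow>
     po_on (eager_carrier eB eA t) (eager_order eB eA t) \<and>
     chain_complete (eager_carrier eB eA t) (eager_order eB eA t)"
proof (induction t)
  case TBool
  then show ?case by (simp add: po_on_discrete chain_complete_discrete)
next
  case (TFun t1 t2)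
  then show ?case
    using fun_domain.po_on_dom[OF eden_fun_domain] fun_domain.chain_complete_dom[OF eden_fun_domain]
    by (metis eager_adequate.simps(2))
qed

lemma sden_cpo:
  "stack_adequate sB sA t \<Longrightarrow>
     po_on (stack_carrier sB sA t) (stack_order sB sA t) \<and>
     chain_complete (stack_carrier sB sA t) (stack_order sB sA t)"
proof (induction t)
  case TBool
  then show ?case by (simp add: po_on_discrete chain_complete_discrete)
next
  case (TFun t1 t2)
  then show ?case
    using fun_domain.po_on_dom[OF sden_fun_domain] fun_domain.chain_complete_dom[OF sden_fun_domain]
    by (metis stack_adequate.simps(2))
qed

subsection \<open>The simulation relation\<close>

lemma sim_eq_lift_rel:
  "sim Au eB eA sB sA t x y = lift_rel (\<lambda>a b. sim Au eB eA sB sA t (Val a) (Val b)) x y"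
  by (cases t) (auto simp: lift_rel_def split: lift.splits)

lemma sim_TFun_Val:
  "sim Au eB eA sB sA (TFun t1 t2) (Val f) (Val g) \<longleftrightarrow>
     (\<forall>S. S \<noteq> [] \<longrightarrow> (\<forall>d\<in>eager_carrier eB eA t1. \<forall>d'\<in>stack_carrier sB sA t1.
        sim Au eB eA sB sA t1 (Val d) (Val d') \<longrightarrow>
        sim Au eB eA sB sA t2 (eA f (privs Au S) d) (sA g S d')))"
  by simp

lemma sim_TFun_chain_lub:
  fixes Au :: "'n \<Rightarrow> 'p set" and sA :: "'s \<Rightarrow> ('n \<times> 'p set) list \<Rightarrow> 's \<Rightarrow> 's lift"
  assumes adequate: "eager_adequate eB eA (TFun t1 t2)" "stack_adequate sB sA (TFun t1 t2)"
    and u: "is_chain (eager_carrier eB eA (TFun t1 t2)) (eager_order eB eA (TFun t1 t2)) u"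
    and u': "is_chain (stack_carrier sB sA (TFun t1 t2)) (stack_order sB sA (TFun t1 t2)) u'"
    and sim_u: "\<forall>i. sim Au eB eA sB sA (TFun t1 t2) (Val (u i)) (Val (u' i))"
    and sim_lub_t2: "\<And>v w. is_chain (eager_carrier eB eA t2) (eager_order eB eA t2) v \<Longrightarrow>
        is_chain (stack_carrier sB sA t2) (stack_order sB sA t2) w \<Longrightarrow>
        \<forall>i. sim Au eB eA sB sA t2 (Val (v i)) (Val (w i)) \<Longrightarrow>
        sim Au eB eA sB sA t2 (Val (chain_lub (eager_carrier eB eA t2) (eager_order eB eA t2) v))
          (Val (chain_lub (stack_carrier sB sA t2) (stack_order sB sA t2) w))"
  shows "sim Au eB eA sB sA (TFun t1 t2)
    (Val (chain_lub (eager_carrier eB eA (TFun t1 t2)) (eager_order eB eA (TFun t1 t2)) u))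
    (Val (chain_lub (stack_carrier sB sA (TFun t1 t2)) (stack_order sB sA (TFun t1 t2)) u'))"
proof -
  have cpo_t2: "po_on (eager_carrier eB eA t2) (eager_order eB eA t2)"
    "chain_complete (eager_carrier eB eA t2) (eager_order eB eA t2)"
    "po_on (stack_carrier sB sA t2) (stack_order sB sA t2)"
    "chain_complete (stack_carrier sB sA t2) (stack_order sB sA t2)"
    using eden_cpo[of eB eA t2] sden_cpo[of sB sA t2] adequate by simp_all
  interpret E: fun_domain "eager_carrier eB eA t1" "eager_order eB eA t1"
      "eager_carrier eB eA t2" "eager_order eB eA t2" UNIV eA
      "eager_carrier eB eA (TFun t1 t2)" "eager_order eB eA (TFun t1 t2)"
    by (rule eden_fun_domain[OF adequate(1) cpo_t2(1,2)])
  interpret S: fun_domain "stack_carrier sB sA t1" "stack_order sB sA t1"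
      "stack_carrier sB sA t2" "stack_order sB sA t2" "{S. S \<noteq> []}" sA
      "stack_carrier sB sA (TFun t1 t2)" "stack_order sB sA (TFun t1 t2)"
    by (rule sden_fun_domain[OF adequate(2) cpo_t2(3,4)])
  show ?thesis
    unfolding sim_TFun_Val
  proof (intro allI impI ballI)
    fix S :: "('n \<times> 'p set) list" and d d'
    assume S: "S \<noteq> []" and d: "d \<in> eager_carrier eB eA t1" and d': "d' \<in> stack_carrier sB sA t1"
      and sim_d: "sim Au eB eA sB sA t1 (Val d) (Val d')"
    from S have S_in: "S \<in> {S. S \<noteq> []}" by simp
    have rel: "lift_rel (\<lambda>a b. sim Au eB eA sB sA t2 (Val a) (Val b))
            (eA (u n) (privs Au S) d) (sA (u' n) S d')" for n
      using sim_u S d d' sim_d by (simp only: sim_TFun_Val flip: sim_eq_lift_rel) blast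
    have "lift_rel (\<lambda>a b. sim Au eB eA sB sA t2 (Val a) (Val b))
        (chain_lub (liftset (eager_carrier eB eA t2)) (lift_le (eager_order eB eA t2))
           (\<lambda>n. eA (u n) (privs Au S) d))
        (chain_lub (liftset (stack_carrier sB sA t2)) (lift_le (stack_order sB sA t2))
           (\<lambda>n. sA (u' n) S d'))"
      by (rule lift_rel_chain_lub[OF cpo_t2 E.chain_apply[OF u UNIV_I d] S.chain_apply[OF u' S_in d']
        rel sim_lub_t2])
    then show "sim Au eB eA sB sA t2 (eA (chain_lub (eager_carrier eB eA (TFun t1 t2))
          (eager_order eB eA (TFun t1 t2)) u) (privs Au S) d)
        (sA (chain_lub (stack_carrier sB sA (TFun t1 t2)) (stack_order sB sA (TFun t1 t2)) u') S d')"
      by (simp only: E.A_chain_lub[OF u UNIV_I d] S.A_chain_lub[OF u' S_in d'] flip: sim_eq_lift_rel)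
  qed
qed

theorem lemma6:
  fixes Au :: "'n \<Rightarrow> 'p set"
    and eB :: "bool \<Rightarrow> 'e" and eA :: "'e \<Rightarrow> 'p set \<Rightarrow> 'e \<Rightarrow> 'e lift"
    and sB :: "bool \<Rightarrow> 's" and sA :: "'s \<Rightarrow> ('n \<times> 'p set) list \<Rightarrow> 's \<Rightarrow> 's lift"
    and t :: ty and u :: "nat \<Rightarrow> 'e" and u' :: "nat \<Rightarrow> 's"
  assumes "inj eB" and "inj sB"
    and "eager_adequate eB eA t" and "stack_adequate sB sA t"
    and "is_chain (fst (eden eB eA t)) (snd (eden eB eA t)) u"
    and "is_chain (fst (sden sB sA t)) (snd (sden sB sA t)) u'"
    and "\<forall>i. sim Au eB eA sB sA t (Val (u i)) (Val (u' i))"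
  shows "sim Au eB eA sB sA t
           (Val (chain_lub (fst (eden eB eA t)) (snd (eden eB eA t)) u))
           (Val (chain_lub (fst (sden sB sA t)) (snd (sden sB sA t)) u'))"
  using assms(3-7)
proof (induction t arbitrary: u u')
  case TBool
  then show ?case by (simp add: chain_lub_discrete)
next
  case (TFun t1 t2)
  then show ?case by (intro sim_TFun_chain_lub) auto
qed

end
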